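(* Let $\Gamma$ be an imperfect-recall extensive-form game, $i\in\mathcal N$ a player, and $\Gamma'$ a game with the same game tree as $\Gamma$ but potentially different infosets. If $\Gamma'\succeq_i\Gamma$ and player $i$ has perfect recall in $\Gamma'$, then $\Gamma'\succeq_i\mathrm{pr}_i(\Gamma)$. Moreover, player $i$ has perfect recall in $\mathrm{pr}_i(\Gamma)$.
   Context: An extensive-form game consists of a finite rooted tree (node set $\mathcal H$, leaves $\mathcal Z$, actions $A_h$ at nonterminal nodes), a finite set $\mathcal N$ of players plus chance, an assignment of nonterminal nodes to players or chance (with $\mathcal H_i$ the nodes of player $i$), chance distributions, utilities $u_i:\mathcal Z\to\mathbb R_{\ge0}$, and for each $i$ a partition $\mathcal I_i$ of $\mathcal H_i$ into infosets, all nodes of an infoset having the same action set. The game tree consists of $\mathcal H$, actions and chance distributions. For a node $h$ at depth $d$, with root-to-$h$ path $(h_0,\dots,h_{d-1})$ (excluding $h$), $\mathrm{obs}(h)=(i_k,I_k,a_k)_{k=0}^{d-1}$ records the player acting at $h_k$, the infoset of $h_k$ and the action taken; $\mathrm{obs}_i(h)$ is the subsequence with $i_k=i$. Player $i$ has perfect recall if $\mathrm{obs}_i(h)=\mathrm{obs}_i(h')$ for all $I\in\mathcal I_i$ and $h,h'\in I$; a game is imperfect-recall if some player lacks perfect recall. For games $\Gamma,\Gamma'$ with the same game tree and utilities, $\Gamma'\succeq_i\Gamma$ means every infoset of player $i$ in $\Gamma$ is a disjoint union of infosets of player $i$ in $\Gamma'$. $\mathrm{pr}_i(\Gamma)$ is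 the game with the same tree and utilities as $\Gamma$ in which each $I\in\mathcal I_i$ is partitioned into the equivalence classes of $h\sim h'\iff\mathrm{obs}_i(h)=\mathrm{obs}_i(h')$ (obs computed in $\Gamma$), other players' infosets unchanged. *)

theory Defs
  imports Complex_Main
begin

text \<open>Game trees. Nodes are histories, i.e. lists of actions from the root.
  The player function returns Some i for a node of player i and None for a chance node.\<close>

record ('p, 'a) game_tree =
  nodes   :: "'a list set"
  players :: "'p set"
  player  :: "'a list \<Rightarrow> 'p option"
  chance  :: "'a list \<Rightarrow> 'a \<Rightarrow> real"
  util    :: "'p \<Rightarrow> 'a list \<Rightarrow> real"

definition actions :: "('p, 'a) game_tree \<Rightarrow> 'a list \<Rightarrow> 'a set" where
  "actions T h = {a. h @ [a] \<in> nodes T}"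

definition leaves :: "('p, 'a) game_tree \<Rightarrow> 'a list set" where
  "leaves T = {h \<in> nodes T. actions T h = {}}"

definition player_nodes :: "('p, 'a) game_tree \<Rightarrow> 'p \<Rightarrow> 'a list set" where
  "player_nodes T i = {h \<in> nodes T. h \<notin> leaves T \<and> player T h = Some i}"

definition wf_tree :: "('p, 'a) game_tree \<Rightarrow> bool" where
  "wf_tree T \<longleftrightarrow>
     finite (nodes T) \<and> [] \<in> nodes T \<and> finite (players T) \<and>
     (\<forall>h a. h @ [a] \<in> nodes T \<longrightarrow> h \<in> nodes T) \<and>
     (\<forall>h \<in> nodes T - leaves T.
        (case player T h of
           Some i \<Rightarrow> i \<in> players T
         | None \<Rightarrow> (\<forall>a \<in> actions T h. chance T h a \<ge> 0) \<and>
                   (\<Sum>a \<in> actions T h. chance T h a) = 1)) \<and>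
     (\<forall>i \<in> players T. \<forall>z \<in> leaves T. util T i z \<ge> 0)"

type_synonym ('p, 'a) infosets = "'p \<Rightarrow> 'a list set set"

definition wf_game :: "('p, 'a) game_tree \<Rightarrow> ('p, 'a) infosets \<Rightarrow> bool" where
  "wf_game T Is \<longleftrightarrow> wf_tree T \<and>
     (\<forall>i \<in> players T.
        (\<forall>I \<in> Is i. I \<noteq> {}) \<and>
        (\<forall>I \<in> Is i. \<forall>J \<in> Is i. I \<noteq> J \<longrightarrow> I \<inter> J = {}) \<and>
        \<Union>(Is i) = player_nodes T i \<and>
        (\<forall>I \<in> Is i. \<forall>h \<in> I. \<forall>h' \<in> I. actions T h = actions T h'))"

definition infoset_of :: "('p, 'a) game_tree \<Rightarrow> ('p, 'a) infosets \<Rightarrow> 'a list \<Rightarrow> 'a list set option" where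
  "infoset_of T Is h = (case player T h of
      Some i \<Rightarrow> Some (THE I. I \<in> Is i \<and> h \<in> I)
    | None \<Rightarrow> None)"

definition obs :: "('p, 'a) game_tree \<Rightarrow> ('p, 'a) infosets \<Rightarrow> 'a list
                   \<Rightarrow> ('p option \<times> 'a list set option \<times> 'a) list" where
  "obs T Is h = map (\<lambda>k. (player T (take k h), infoset_of T Is (take k h), h ! k)) [0..<length h]"

definition obs_i :: "('p, 'a) game_tree \<Rightarrow> ('p, 'a) infosets \<Rightarrow> 'p \<Rightarrow> 'a list
                   \<Rightarrow> ('p option \<times> 'a list set option \<times> 'a) list" where
  "obs_i T Is i h = filter (\<lambda>(j, _, _). j = Some i) (obs T Is h)"

definition perfect_recall :: "('p, 'a) game_tree \<Rightarrow> ('p, 'a) infosets \<Rightarrow> 'p \<Rightarrow> bool" where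
  "perfect_recall T Is i \<longleftrightarrow>
     (\<forall>I \<in> Is i. \<forall>h \<in> I. \<forall>h' \<in> I. obs_i T Is i h = obs_i T Is i h')"

definition imperfect_recall_game :: "('p, 'a) game_tree \<Rightarrow> ('p, 'a) infosets \<Rightarrow> bool" where
  "imperfect_recall_game T Is \<longleftrightarrow> (\<exists>j \<in> players T. \<not> perfect_recall T Is j)"

text \<open>refines i Is' Is: Gamma' \<succeq>_i Gamma, i.e. every infoset of player i in Gamma
  is a disjoint union of infosets of player i in Gamma'.\<close>

definition refines :: "'p \<Rightarrow> ('p, 'a) infosets \<Rightarrow> ('p, 'a) infosets \<Rightarrow> bool" where
  "refines i Is' Is \<longleftrightarrow>
     (\<forall>I \<in> Is i. \<exists>S \<subseteq> Is' i. pairwise disjnt S \<and> I = \<Union>S)"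

definition pr :: "('p, 'a) game_tree \<Rightarrow> ('p, 'a) infosets \<Rightarrow> 'p \<Rightarrow> ('p, 'a) infosets" where
  "pr T Is i = Is(i := (\<Union>I \<in> Is i.
      {{h' \<in> I. obs_i T Is i h' = obs_i T Is i h} | h. h \<in> I}))"

end

theory Submission
  imports Defs
begin

text \<open>Suppose that at every node of player i the infoset in one information structure is a
  function of the infoset and the observation sequence of that node in another structure. Then,
  by induction along the path, the whole observation sequence in the first structure is a function
  of the one in the second, so equal observations in the second force equal observations in the
  first. Passing from a refinement Gamma' to Gamma is such a coarsening, so the nodes of one
  infoset of a perfect-recall Gamma' share their Gamma-observation; they therefore lie in a single
  infoset of pr_i(Gamma), which is hence a union of Gamma'-infosets. The infosets of pr_i(Gamma)
  are in turn determined by the Gamma-infoset and the Gamma-observation, and the nodes of one of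
  them share the latter, hence also their pr_i(Gamma)-observation.\<close>

lemma obs_snoc: "obs T Is (h @ [a]) = obs T Is h @ [(player T h, infoset_of T Is h, a)]"
proof -
  have "map (\<lambda>k. (player T (take k (h @ [a])), infoset_of T Is (take k (h @ [a])), (h @ [a]) ! k))
          [0..<length h]
      = map (\<lambda>k. (player T (take k h), infoset_of T Is (take k h), h ! k)) [0..<length h]"
    by (rule map_cong) (auto simp: nth_append)
  then show ?thesis unfolding obs_def by simp
qed

lemma obs_i_Nil [simp]: "obs_i T Is i [] = []"
  unfolding obs_i_def obs_def by simp

lemma obs_i_snoc:
  "obs_i T Is i (h @ [a]) = obs_i T Is i h @
     (if player T h = Some i then [(player T h, infoset_of T Is h, a)] else [])"
  unfolding obs_i_def by (simp add: obs_snoc)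

definition relabel :: "('s \<Rightarrow> ('q \<times> 's \<times> 'a) list \<Rightarrow> 't) \<Rightarrow> ('q \<times> 's \<times> 'a) list \<Rightarrow> ('q \<times> 't \<times> 'a) list"
  where "relabel G xs =
    map (\<lambda>k. (fst (xs ! k), G (fst (snd (xs ! k))) (take k xs), snd (snd (xs ! k)))) [0..<length xs]"

lemma relabel_Nil [simp]: "relabel G [] = []"
  unfolding relabel_def by simp

lemma relabel_snoc: "relabel G (xs @ [(q, s, a)]) = relabel G xs @ [(q, G s xs, a)]"
proof -
  let ?ys = "xs @ [(q, s, a)]"
  have "map (\<lambda>k. (fst (?ys ! k), G (fst (snd (?ys ! k))) (take k ?ys), snd (snd (?ys ! k))))
          [0..<length xs]
      = map (\<lambda>k. (fst (xs ! k), G (fst (snd (xs ! k))) (take k xs), snd (snd (xs ! k))))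
          [0..<length xs]"
    by (rule map_cong) (auto simp: nth_append)
  then show ?thesis unfolding relabel_def by simp
qed

lemma wf_tree_prefix_closed: "wf_tree T \<Longrightarrow> h @ [a] \<in> nodes T \<Longrightarrow> h \<in> nodes T"
  unfolding wf_tree_def by blast

lemma player_nodes_snocI:
  assumes "wf_tree T" "h @ [a] \<in> nodes T" "player T h = Some i"
  shows "h \<in> player_nodes T i"
  using assms wf_tree_prefix_closed[OF assms(1,2)]
  unfolding player_nodes_def leaves_def actions_def by auto

lemma obs_i_relabel:
  assumes "wf_tree T"
    and determined: "\<And>p. p \<in> player_nodes T i \<Longrightarrow>
          infoset_of T Is' p = G (infoset_of T Is p) (obs_i T Is i p)"
    and "h \<in> nodes T"
  shows "obs_i T Is' i h = relabel G (obs_i T Is i h)"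
  using assms(3)
proof (induction h rule: rev_induct)
  case Nil
  then show ?case by simp
next
  case (snoc a h)
  then have IH: "obs_i T Is' i h = relabel G (obs_i T Is i h)"
    using wf_tree_prefix_closed[OF assms(1)] by blast
  show ?case
  proof (cases "player T h = Some i")
    case True
    then have "h \<in> player_nodes T i" using player_nodes_snocI[OF assms(1) snoc.prems] by blast
    then show ?thesis using True IH determined by (simp add: obs_i_snoc relabel_snoc)
  qed (simp add: obs_i_snoc IH)
qed

lemma obs_i_eq_if_infoset_determined:
  assumes "wf_tree T"
    and "\<And>p. p \<in> player_nodes T i \<Longrightarrow>
          infoset_of T Is' p = G (infoset_of T Is p) (obs_i T Is i p)"
    and "h1 \<in> nodes T" "h2 \<in> nodes T" "obs_i T Is i h1 = obs_i T Is i h2"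
  shows "obs_i T Is' i h1 = obs_i T Is' i h2"
  using obs_i_relabel[of T i Is' G Is, OF assms(1,2)] assms(3-5) by metis

lemma wf_game_wf_tree: "wf_game T Is \<Longrightarrow> wf_tree T"
  unfolding wf_game_def by (rule conjunct1)

lemma wf_game_infosetsD:
  assumes "wf_game T Is" "i \<in> players T"
  shows "(\<forall>I \<in> Is i. I \<noteq> {}) \<and> (\<forall>I \<in> Is i. \<forall>J \<in> Is i. I \<noteq> J \<longrightarrow> I \<inter> J = {}) \<and>
    \<Union>(Is i) = player_nodes T i"
proof -
  have "\<forall>i \<in> players T.
        (\<forall>I \<in> Is i. I \<noteq> {}) \<and>
        (\<forall>I \<in> Is i. \<forall>J \<in> Is i. I \<noteq> J \<longrightarrow> I \<inter> J = {}) \<and>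
        \<Union>(Is i) = player_nodes T i \<and>
        (\<forall>I \<in> Is i. \<forall>h \<in> I. \<forall>h' \<in> I. actions T h = actions T h')"
    using assms(1) unfolding wf_game_def by (rule conjunct2)
  then show ?thesis using assms(2) by auto
qed

lemma wf_game_Union_infosets: "wf_game T Is \<Longrightarrow> i \<in> players T \<Longrightarrow> \<Union>(Is i) = player_nodes T i"
  using wf_game_infosetsD[of T Is i] by blast

lemma wf_game_infosets_disjoint:
  "wf_game T Is \<Longrightarrow> i \<in> players T \<Longrightarrow> I \<in> Is i \<Longrightarrow> J \<in> Is i \<Longrightarrow> h \<in> I \<Longrightarrow> h \<in> J \<Longrightarrow> I = J"
  using wf_game_infosetsD[of T Is i] by blast

lemma wf_game_infosets_pairwise_disjnt: "wf_game T Is \<Longrightarrow> i \<in> players T \<Longrightarrow> pairwise disjnt (Is i)"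
  unfolding pairwise_def disjnt_def using wf_game_infosetsD[of T Is i] by blast

lemma wf_game_infoset_nonempty: "wf_game T Is \<Longrightarrow> i \<in> players T \<Longrightarrow> I \<in> Is i \<Longrightarrow> I \<noteq> {}"
  using wf_game_infosetsD[of T Is i] by blast

lemma infoset_nodes:
  "wf_game T Is \<Longrightarrow> i \<in> players T \<Longrightarrow> I \<in> Is i \<Longrightarrow> h \<in> I \<Longrightarrow> h \<in> player_nodes T i"
  by (metis UnionI wf_game_Union_infosets)

lemma player_node_in_infoset:
  assumes "wf_game T Is" "i \<in> players T" "p \<in> player_nodes T i"
  obtains I where "I \<in> Is i" "p \<in> I"
proof -
  have "p \<in> \<Union>(Is i)" using assms(3) by (simp add: wf_game_Union_infosets[OF assms(1,2)])
  then show thesis using that by blast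
qed

lemma infoset_of_eqI:
  assumes "wf_game T Is" "i \<in> players T" "I \<in> Is i" "p \<in> I"
  shows "infoset_of T Is p = Some I"
proof -
  have "player T p = Some i" using infoset_nodes[OF assms] unfolding player_nodes_def by simp
  moreover have "(THE I. I \<in> Is i \<and> p \<in> I) = I"
  proof (rule the_equality)
    show "I \<in> Is i \<and> p \<in> I" using assms(3,4) ..
    show "J = I" if "J \<in> Is i \<and> p \<in> J" for J
      using wf_game_infosets_disjoint[OF assms(1,2)] that assms(3,4) by blast
  qed
  ultimately show ?thesis unfolding infoset_of_def by simp
qed

lemma refinesE:
  assumes "refines i Is' Is" "I \<in> Is i"
  obtains S where "S \<subseteq> Is' i" "I = \<Union>S"
  using assms unfolding refines_def by auto

lemma refines_infoset_subset:
  assumes "wf_game T Is" "wf_game T Is'" "i \<in> players T" "refines i Is' Is" "I' \<in> Is' i"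
  obtains I where "I \<in> Is i" "I' \<subseteq> I"
proof -
  obtain p where p: "p \<in> I'" using wf_game_infoset_nonempty[OF assms(2,3,5)] by blast
  obtain I where I: "I \<in> Is i" "p \<in> I"
    using player_node_in_infoset[OF assms(1,3) infoset_nodes[OF assms(2,3,5) p]] .
  obtain S where S: "S \<subseteq> Is' i" "I = \<Union>S" using refinesE[OF assms(4) I(1)] .
  then obtain I'' where "I'' \<in> S" "p \<in> I''" using I(2) by blast
  moreover have "I'' = I'"
    using wf_game_infosets_disjoint[OF assms(2,3)] S(1) \<open>I'' \<in> S\<close> \<open>p \<in> I''\<close> assms(5) p by blast
  ultimately have "I' \<subseteq> I" using S(2) by blast
  with I(1) show thesis by (rule that)
qed

lemma obs_i_eq_if_refines:
  assumes "wf_game T Is" "wf_game T Is'" "i \<in> players T" "refines i Is' Is"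
    and "h1 \<in> nodes T" "h2 \<in> nodes T" "obs_i T Is' i h1 = obs_i T Is' i h2"
  shows "obs_i T Is i h1 = obs_i T Is i h2"
proof -
  define coarsen where "coarsen I' = (THE I. I \<in> Is i \<and> I' \<subseteq> I)" for I'
  have "infoset_of T Is p = map_option coarsen (infoset_of T Is' p)"
    if p: "p \<in> player_nodes T i" for p
  proof -
    obtain I' where I': "I' \<in> Is' i" "p \<in> I'" using player_node_in_infoset[OF assms(2,3) p] .
    obtain I where I: "I \<in> Is i" "I' \<subseteq> I" using refines_infoset_subset[OF assms(1-4) I'(1)] .
    have "coarsen I' = I"
      unfolding coarsen_def
    proof (rule the_equality)
      show "J = I" if "J \<in> Is i \<and> I' \<subseteq> J" for J
        using wf_game_infosets_disjoint[OF assms(1,3)] that I I'(2) by blast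
    qed (use I in blast)
    then show ?thesis using infoset_of_eqI[OF assms(1,3) I(1)] infoset_of_eqI[OF assms(2,3) I'] I I' by auto
  qed
  then show ?thesis
    using obs_i_eq_if_infoset_determined[where G = "\<lambda>x _. map_option coarsen x",
        OF wf_game_wf_tree[OF assms(2)] _ assms(5-7)]
    by blast
qed

lemma pr_infosets:
  "pr T Is i i = (\<Union>I \<in> Is i. {{h' \<in> I. obs_i T Is i h' = obs_i T Is i h} | h. h \<in> I})"
  unfolding pr_def by simp

lemma infoset_of_pr:
  assumes "wf_game T Is" "i \<in> players T" "I \<in> Is i" "p \<in> I"
  shows "infoset_of T (pr T Is i) p = Some {h \<in> I. obs_i T Is i h = obs_i T Is i p}"
proof -
  have "player T p = Some i" using infoset_nodes[OF assms] unfolding player_nodes_def by simp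
  moreover have "(THE J. J \<in> pr T Is i i \<and> p \<in> J) = {h \<in> I. obs_i T Is i h = obs_i T Is i p}"
  proof (rule the_equality)
    fix J assume "J \<in> pr T Is i i \<and> p \<in> J"
    then obtain I2 h where "I2 \<in> Is i" "J = {h' \<in> I2. obs_i T Is i h' = obs_i T Is i h}" "p \<in> J"
      unfolding pr_infosets by blast
    moreover then have "I2 = I" using wf_game_infosets_disjoint[OF assms(1,2)] assms(3,4) by blast
    ultimately show "J = {h \<in> I. obs_i T Is i h = obs_i T Is i p}" by auto
  qed (use assms(3,4) in \<open>auto simp: pr_infosets\<close>)
  ultimately show ?thesis unfolding infoset_of_def by simp
qed

lemma perfect_recall_pr:
  assumes "wf_game T Is" "i \<in> players T"
  shows "perfect_recall T (pr T Is i) i"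
  unfolding perfect_recall_def
proof (intro ballI)
  let ?split = "\<lambda>x ob. map_option (\<lambda>I. {h \<in> I. obs_i T Is i h = ob}) x"
  have determined: "infoset_of T (pr T Is i) p = ?split (infoset_of T Is p) (obs_i T Is i p)"
    if p: "p \<in> player_nodes T i" for p
  proof -
    obtain I where "I \<in> Is i" "p \<in> I" using player_node_in_infoset[OF assms p] .
    then show ?thesis using infoset_of_pr[OF assms] infoset_of_eqI[OF assms] by simp
  qed
  fix J h1 h2 assume "J \<in> pr T Is i i" "h1 \<in> J" "h2 \<in> J"
  then obtain I h where I: "I \<in> Is i" and "J = {h' \<in> I. obs_i T Is i h' = obs_i T Is i h}"
    unfolding pr_infosets by blast
  then have "h1 \<in> nodes T" "h2 \<in> nodes T" "obs_i T Is i h1 = obs_i T Is i h2"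
    using \<open>h1 \<in> J\<close> \<open>h2 \<in> J\<close> infoset_nodes[OF assms I] unfolding player_nodes_def by auto
  then show "obs_i T (pr T Is i) i h1 = obs_i T (pr T Is i) i h2"
    using obs_i_eq_if_infoset_determined[OF wf_game_wf_tree[OF assms(1)] determined] by blast
qed

lemma refines_pr:
  assumes "wf_game T Is" "wf_game T Is'" "i \<in> players T" "refines i Is' Is"
    and "perfect_recall T Is' i"
  shows "refines i Is' (pr T Is i)"
  unfolding refines_def
proof
  fix J assume "J \<in> pr T Is i i"
  then obtain I h where I: "I \<in> Is i" and J: "J = {h' \<in> I. obs_i T Is i h' = obs_i T Is i h}"
    unfolding pr_infosets by blast
  obtain S0 where S0: "S0 \<subseteq> Is' i" "I = \<Union>S0" using refinesE[OF assms(4) I] .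
  let ?S = "{I' \<in> Is' i. I' \<subseteq> J}"
  have block_in_J: "I' \<subseteq> J" if I': "I' \<in> S0" "h1 \<in> I'" "h1 \<in> J" for I' h1
  proof
    fix h2 assume h2: "h2 \<in> I'"
    have "I' \<subseteq> I" unfolding S0(2) using I'(1) by blast
    then have "h1 \<in> nodes T" "h2 \<in> nodes T" "h2 \<in> I"
      using I'(2) h2 infoset_nodes[OF assms(1,3) I] unfolding player_nodes_def by auto
    moreover have "obs_i T Is' i h1 = obs_i T Is' i h2"
      using assms(5) S0(1) I'(1,2) h2 unfolding perfect_recall_def by blast
    ultimately have "obs_i T Is i h2 = obs_i T Is i h1"
      using obs_i_eq_if_refines[OF assms(1-4), of h1 h2] by simp
    then show "h2 \<in> J" using I'(3) \<open>h2 \<in> I\<close> unfolding J by simp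
  qed
  have "J \<subseteq> \<Union>?S"
  proof
    fix h1 assume "h1 \<in> J"
    moreover have "J \<subseteq> \<Union>S0" unfolding J S0(2) by blast
    ultimately obtain I' where I': "I' \<in> S0" "h1 \<in> I'" by blast
    then have "I' \<in> ?S" using block_in_J[OF I' \<open>h1 \<in> J\<close>] S0(1) by blast
    with I'(2) show "h1 \<in> \<Union>?S" by blast
  qed
  then have "J = \<Union>?S" by blast
  moreover have "pairwise disjnt ?S"
    by (rule pairwise_subset[OF wf_game_infosets_pairwise_disjnt[OF assms(2,3)]]) blast
  ultimately show "\<exists>S \<subseteq> Is' i. pairwise disjnt S \<and> J = \<Union>S"
    by (intro exI[of _ ?S]) auto
qed

theorem proposition1:
  fixes T :: "('p, 'a) game_tree" and Is Is' :: "('p, 'a) infosets" and i :: 'p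
  assumes "wf_game T Is"
    and "imperfect_recall_game T Is"
    and "i \<in> players T"
    and "wf_game T Is'"
    and "refines i Is' Is"
    and "perfect_recall T Is' i"
  shows "refines i Is' (pr T Is i) \<and> perfect_recall T (pr T Is i) i"
  using refines_pr[OF assms(1,4,3,5,6)] perfect_recall_pr[OF assms(1,3)] by blast

end
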